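(* Let $d\ge1$, $r\in\mathbb N$ with $r\ge1$, $\alpha>0$, and let $\Phi\in\mathrm{CP}_r(\mathbb R^d)$ be real-valued with $|\Phi(x)|\le C(1+\|x\|^\alpha)$ for all $x$. Let $\Xi=\{\xi_1,\dots,\xi_N\}\subset\mathbb R^d$, $N=\binom{d+r-1}{r-1}$, be unisolvent for $\Pi_{r-1}(\mathbb R^d)$ with Lagrange basis $p_1,\dots,p_N$ ($p_j(\xi_k)=\delta_{jk}$), let $\tilde K(x,y):=\Phi(x-y)$ and $$K(x,y):=\Phi(x-y)-\sum_{j=1}^Np_j(x)\Phi(\xi_j-y)-\sum_{k=1}^Np_k(y)\Phi(x-\xi_k)+\sum_{j,k=1}^Np_j(x)p_k(y)\Phi(\xi_j-\xi_k).$$ Set $\beta:=\max\{r-1,(r-1+\alpha)/2\}$ and $\sigma:=\mu-\nu$. Then: (i) if $\mu,\nu\in\mathcal M_\alpha(\mathbb R^d)$, then $\tilde K\in L^1(|\sigma|\otimes|\sigma|)$, so $\mathcal D_{\tilde K}^2(\mu,\nu):=\int\!\!\int\tilde K(x,y)\,\mathrm d\sigma(x)\mathrm d\sigma(y)$ is well defined; (ii) if $\mu,\nu\in\mathcal M_\beta(\mathbb R^d)$, then $K\in L^1(|\sigma|\otimes|\sigma|)$, so $\mathcal D_K^2(\mu,\nu):=\int\!\!\int K(x,y)\,\mathrm d\sigma(x)\mathrm d\sigma(y)$ is well defined; (iii) if $\mu,\nu\in\mathcal M_\alpha(\mathbb R^d)\cap\mathcal M_\beta(\mathbb R^d)$ satisfy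 $\int p\,\mathrm d\mu=\int p\,\mathrm d\nu$ for all $p\in\Pi_{r-1}(\mathbb R^d)$, then $\mathcal D_{\tilde K}^2(\mu,\nu)=\mathcal D_K^2(\mu,\nu)$.
   Context: $\Pi_{r-1}(\mathbb R^d)$: $d$-variate real polynomials of degree $\le r-1$; $\Xi$ is unisolvent if the only $p\in\Pi_{r-1}$ vanishing on $\Xi$ is $p=0$. $\mathrm{CP}_r(\mathbb R^d)$: continuous even $g$ with $\sum_{j,k}a_j\bar a_kg(x_j-x_k)\ge0$ for all $x_1,\dots,x_M$ and all $a\ne0$ with $\sum_ja_jp(x_j)=0$ for all $p\in\Pi_{r-1}(\mathbb R^d)$. It is known that $K$ is then a positive definite kernel. $\mathcal M_\alpha(\mathbb R^d)$: finite signed Radon measures $\mu$ with $\int\|x\|^\alpha\mathrm d|\mu|<\infty$. *)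

theory Defs
  imports "HOL-Analysis.Analysis"
begin

definition poly_space :: "nat \<Rightarrow> ((real^'n::finite) \<Rightarrow> real) set" where
  "poly_space m = {p. \<exists>c :: ('n \<Rightarrow> nat) \<Rightarrow> real. \<forall>x.
      p x = (\<Sum>k\<in>{k::'n\<Rightarrow>nat. sum k UNIV \<le> m}. c k * (\<Prod>i\<in>UNIV. (x$i) ^ k i))}"

definition unisolvent :: "nat \<Rightarrow> nat \<Rightarrow> (nat \<Rightarrow> real^'n::finite) \<Rightarrow> bool" where
  "unisolvent m N xi \<longleftrightarrow>
     (\<forall>p\<in>poly_space m. (\<forall>j<N. p (xi j) = 0) \<longrightarrow> (\<forall>x. p x = 0))"

definition cond_pos_def :: "nat \<Rightarrow> ((real^'n::finite) \<Rightarrow> complex) \<Rightarrow> bool" where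
  "cond_pos_def r g \<longleftrightarrow> continuous_on UNIV g \<and> (\<forall>x. g (- x) = g x) \<and>
     (\<forall>(M::nat) (x :: nat \<Rightarrow> real^'n) (a :: nat \<Rightarrow> complex).
        (\<exists>j<M. a j \<noteq> 0) \<and>
        (\<forall>p\<in>poly_space (r - 1). (\<Sum>j<M. a j * complex_of_real (p (x j))) = 0)
        \<longrightarrow> (\<Sum>j<M. \<Sum>k<M. a j * cnj (a k) * g (x j - x k)) \<in> \<real> \<and>
            0 \<le> Re (\<Sum>j<M. \<Sum>k<M. a j * cnj (a k) * g (x j - x k)))"

text \<open>A finite signed Borel measure is represented as f \<cdot> lam, where lam is a finite
  Borel measure and f \<in> L^1(lam); its total variation is |f| \<cdot> lam.\<close>
definition total_var :: "'a measure \<Rightarrow> ('a \<Rightarrow> real) \<Rightarrow> 'a measure" where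
  "total_var lam f = density lam (\<lambda>x. ennreal \<bar>f x\<bar>)"

definition moment_class :: "real \<Rightarrow> (real^'n::finite) measure \<Rightarrow> (real^'n \<Rightarrow> real) \<Rightarrow> bool" where
  "moment_class a lam f \<longleftrightarrow> integrable (total_var lam f) (\<lambda>x. norm x powr a)"

definition discr2 :: "'a measure \<Rightarrow> ('a \<Rightarrow> real) \<Rightarrow> ('a \<Rightarrow> 'a \<Rightarrow> real) \<Rightarrow> real" where
  "discr2 lam s Ker = (\<integral>z. Ker (fst z) (snd z) * s (fst z) * s (snd z) \<partial>(lam \<Otimes>\<^sub>M lam))"

definition red_kernel :: "((real^'n::finite) \<Rightarrow> real) \<Rightarrow> (nat \<Rightarrow> real^'n \<Rightarrow> real) \<Rightarrow>
    (nat \<Rightarrow> real^'n) \<Rightarrow> nat \<Rightarrow> real^'n \<Rightarrow> real^'n \<Rightarrow> real" where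
  "red_kernel \<Phi> p xi N x y =
     \<Phi> (x - y) - (\<Sum>j<N. p j x * \<Phi> (xi j - y)) - (\<Sum>k<N. p k y * \<Phi> (x - xi k))
     + (\<Sum>j<N. \<Sum>k<N. p j x * p k y * \<Phi> (xi j - xi k))"

end

theory Submission
  imports Defs "HOL-Library.Landau_Symbols"
begin

(* Both kernels are dominated by products of the weights w_e x = 1 + |x|^e.  For the
   translation kernel this is the growth bound on \<Phi> together with
   w_e (x - y) \<le> (1 + 2^e) w_e x w_e y.  For the reduced kernel, K x y is the \<Phi>-quadratic form
   of the two functionals \<delta>_x - \<Sum>j p_j(x) \<delta>_(xi j) and \<delta>_y - \<Sum>j p_j(y) \<delta>_(xi j); these
   annihilate polynomials of degree < r by Lagrange interpolation, so conditional positive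
   definiteness makes (K x y) a positive semidefinite kernel and |K x y|^2 \<le> K x x K y y, while
   K x x = O(w_\<beta>(x)^2) by the polynomial growth of the Lagrange basis.  Finite moments of
   \<sigma> = f - g then give integrability against |\<sigma>| \<otimes> |\<sigma>|.  Finally, every correction term in
   K x y \<sigma>(x) \<sigma>(y) is a sum of products a(x) b(y) in which a or b is p_j \<sigma>, and
   \<integral> p_j \<sigma> = 0 because f and g have the same polynomial moments; by Fubini these terms
   integrate to zero. *)

lemma bigo_top_integrable:
  fixes f g :: "'a \<Rightarrow> real"
  assumes "f \<in> O[top](g)" "f \<in> borel_measurable M" "integrable M g"
  shows "integrable M f"
proof -
  obtain c where c: "\<forall>x. norm (f x) \<le> c * norm (g x)"
    using assms(1) by (elim landau_o.bigE) auto
  show ?thesis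
  proof (rule Bochner_Integration.integrable_bound)
    show "integrable M (\<lambda>x. c * \<bar>g x\<bar>)" using assms(3) by simp
    show "AE x in M. norm (f x) \<le> norm (c * \<bar>g x\<bar>)"
      using c by (intro AE_I2) (auto simp: abs_mult intro: order_trans[OF _ mult_right_mono])
  qed (fact assms(2))
qed

lemma borel_measurable_continuous_on_sets_borel:
  fixes f :: "'a::topological_space \<Rightarrow> 'b::topological_space"
  assumes "sets M = sets borel" "continuous_on UNIV f"
  shows "f \<in> borel_measurable M"
  using borel_measurable_continuous_onI[OF assms(2)] measurable_cong_sets[OF assms(1) refl] by blast

lemma sets_pair_measure_borel:
  fixes M :: "'a::second_countable_topology measure" and N :: "'b::second_countable_topology measure"
  assumes "sets M = sets borel" "sets N = sets borel"
  shows "sets (M \<Otimes>\<^sub>M N) = sets borel"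
proof -
  have "sets (M \<Otimes>\<^sub>M N) = sets (borel \<Otimes>\<^sub>M borel)"
    by (rule sets_pair_measure_cong[OF assms])
  then show ?thesis by (simp only: borel_prod)
qed

context pair_sigma_finite
begin

lemma integrable_product:
  fixes a b :: "_ \<Rightarrow> real"
  assumes a: "integrable M1 a" and b: "integrable M2 b"
  shows "integrable (M1 \<Otimes>\<^sub>M M2) (\<lambda>z. a (fst z) * b (snd z))"
proof (rule Fubini_integrable)
  show "(\<lambda>z. a (fst z) * b (snd z)) \<in> borel_measurable (M1 \<Otimes>\<^sub>M M2)"
    using a b by measurable
  have "(\<lambda>x. \<integral>y. norm (a (fst (x, y)) * b (snd (x, y))) \<partial>M2) = (\<lambda>x. \<bar>a x\<bar> * (\<integral>y. \<bar>b y\<bar> \<partial>M2))"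
    by (simp add: abs_mult)
  then show "integrable M1 (\<lambda>x. \<integral>y. norm (a (fst (x, y)) * b (snd (x, y))) \<partial>M2)"
    using a by simp
  show "AE x in M1. integrable M2 (\<lambda>y. a (fst (x, y)) * b (snd (x, y)))"
    using b by simp
qed

lemma integral_product:
  fixes a b :: "_ \<Rightarrow> real"
  assumes "integrable M1 a" "integrable M2 b"
  shows "(\<integral>z. a (fst z) * b (snd z) \<partial>(M1 \<Otimes>\<^sub>M M2)) = (\<integral>x. a x \<partial>M1) * (\<integral>y. b y \<partial>M2)"
  using integral_fst'[OF integrable_product[OF assms]] by simp

lemma integral_sum_products:
  fixes a b :: "'i \<Rightarrow> _ \<Rightarrow> real"
  assumes "\<And>j. j \<in> A \<Longrightarrow> integrable M1 (a j)" "\<And>j. j \<in> A \<Longrightarrow> integrable M2 (b j)"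
  shows "integrable (M1 \<Otimes>\<^sub>M M2) (\<lambda>z. \<Sum>j\<in>A. a j (fst z) * b j (snd z))"
    and "(\<integral>z. (\<Sum>j\<in>A. a j (fst z) * b j (snd z)) \<partial>(M1 \<Otimes>\<^sub>M M2))
           = (\<Sum>j\<in>A. (\<integral>x. a j x \<partial>M1) * (\<integral>y. b j y \<partial>M2))"
  using assms by (simp_all add: integrable_product integral_product)

end

section \<open>Polynomial weights\<close>

definition weight :: "real \<Rightarrow> 'a::real_normed_vector \<Rightarrow> real" where
  "weight e x = 1 + norm x powr e"

lemma weight_ge_1: "1 \<le> weight e x"
  by (simp add: weight_def)

lemma weight_pos: "0 < weight e x"
  using weight_ge_1[of e x] by simp

lemma abs_weight [simp]: "\<bar>weight e x\<bar> = weight e x"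
  using weight_ge_1[of e x] by simp

lemma powr_le_1_plus_powr:
  fixes t :: real
  assumes "0 \<le> t" "0 \<le> e" "e \<le> E"
  shows "t powr e \<le> 1 + t powr E"
proof (cases "t \<le> 1")
  case True
  then have "t powr e \<le> 1" using assms by (intro powr_le1) auto
  then show ?thesis using powr_ge_zero[of t E] by linarith
next
  case False
  then have "t powr e \<le> t powr E" using assms by (intro powr_mono) auto
  then show ?thesis by linarith
qed

lemma power_le_weight:
  fixes x :: "'a::real_normed_vector"
  assumes "real n \<le> e"
  shows "norm x ^ n \<le> weight e x"
proof (cases "x = 0")
  case True then show ?thesis by (cases n) (auto simp: weight_def)
next
  case False
  then have "norm x ^ n = norm x powr real n" by (simp add: powr_realpow)
  also have "\<dots> \<le> weight e x" unfolding weight_def using assms by (intro powr_le_1_plus_powr) auto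
  finally show ?thesis .
qed

lemma weight_le_weight:
  assumes "0 \<le> e" "e \<le> E"
  shows "weight e x \<le> 2 * weight E x"
  using powr_le_1_plus_powr[OF norm_ge_zero assms, of x] powr_ge_zero[of "norm x" E]
  unfolding weight_def distrib_left by linarith

lemma weight_mono_bigo:
  assumes "0 \<le> e" "e \<le> E"
  shows "weight e \<in> O[top](weight E)"
  by (intro bigoI[of _ 2]) (simp add: weight_le_weight[OF assms])

lemma weight_mult_le:
  assumes "0 \<le> a" "0 \<le> b" "a + b \<le> 2 * c"
  shows "weight a x * weight b x \<le> 4 * (weight c x)\<^sup>2"
proof -
  define t where "t = norm x"
  have t: "0 \<le> t" unfolding t_def by simp
  have "t powr a \<le> 1 + t powr (2 * c)" "t powr b \<le> 1 + t powr (2 * c)"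
    "t powr (a + b) \<le> 1 + t powr (2 * c)"
    using assms t by (auto intro!: powr_le_1_plus_powr)
  moreover have "weight a x * weight b x = 1 + t powr a + t powr b + t powr (a + b)"
    unfolding weight_def t_def by (simp add: powr_add algebra_simps)
  moreover have "4 * (weight c x)\<^sup>2 = 4 + 8 * t powr c + 4 * t powr (2 * c)"
    unfolding weight_def t_def power2_eq_square by (simp add: algebra_simps flip: powr_add)
  ultimately show ?thesis using powr_ge_zero[of t c] powr_ge_zero[of t "2 * c"] by linarith
qed

lemma weight_mult_bigo:
  assumes "0 \<le> a" "0 \<le> b" "a + b \<le> 2 * c"
  shows "(\<lambda>x. weight a x * weight b x) \<in> O[top](\<lambda>x. (weight c x)\<^sup>2)"
  by (intro bigoI[of _ 4]) (simp add: abs_mult weight_mult_le[OF assms])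

lemma weight_diff_le:
  fixes x y :: "'a::real_normed_vector"
  assumes "0 \<le> e"
  shows "weight e (x - y) \<le> (1 + 2 powr e) * weight e x * weight e y"
proof -
  define X Y P where "X = norm x powr e" and "Y = norm y powr e" and "P = 2 powr e"
  have nn: "0 \<le> X" "0 \<le> Y" "0 \<le> P" unfolding X_def Y_def P_def by auto
  have "norm (x - y) \<le> 2 * max (norm x) (norm y)"
    using norm_triangle_ineq4[of x y] max.cobounded1[of "norm x" "norm y"]
      max.cobounded2[of "norm y" "norm x"] by linarith
  then have "norm (x - y) powr e \<le> (2 * max (norm x) (norm y)) powr e"
    using assms by (intro powr_mono2) auto
  also have "\<dots> = P * max (norm x) (norm y) powr e"
    unfolding P_def by (simp add: powr_mult)
  also have "\<dots> \<le> P * (X + Y)"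
  proof -
    have "max (norm x) (norm y) powr e \<le> X + Y"
      using nn unfolding X_def Y_def by (cases "norm x \<le> norm y") (simp_all add: max_def)
    then show ?thesis using nn by (intro mult_left_mono)
  qed
  finally have "norm (x - y) powr e \<le> P * (X + Y)" .
  moreover have "1 + P * (X + Y) \<le> (1 + P) * (1 + X) * (1 + Y)"
    using nn by (simp add: algebra_simps)
  ultimately show ?thesis unfolding weight_def X_def Y_def P_def by linarith
qed

lemma integrable_total_var_iff:
  fixes F :: "'a \<Rightarrow> real"
  assumes "s \<in> borel_measurable M" "F \<in> borel_measurable M"
  shows "integrable (total_var M s) F \<longleftrightarrow> integrable M (\<lambda>x. F x * s x)"
proof -
  have "integrable (total_var M s) F \<longleftrightarrow> integrable M (\<lambda>x. \<bar>s x\<bar> * F x)"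
    unfolding total_var_def using assms by (subst integrable_density) auto
  also have "\<dots> \<longleftrightarrow> integrable M (\<lambda>x. \<bar>F x * s x\<bar>)"
    using assms by (subst integrable_abs_iff[symmetric]) (auto simp: abs_mult mult.commute)
  also have "\<dots> \<longleftrightarrow> integrable M (\<lambda>x. F x * s x)"
    using assms by (intro integrable_abs_iff) auto
  finally show ?thesis .
qed

lemma finite_measure_total_var:
  assumes "integrable M s"
  shows "finite_measure (total_var M s)"
proof (rule finite_measureI)
  have "emeasure (total_var M s) (space (total_var M s)) = (\<integral>\<^sup>+ x. ennreal (norm (s x)) \<partial>M)"
    unfolding total_var_def using assms
    by (subst emeasure_density) (auto intro!: nn_integral_cong split: split_indicator)
  then show "emeasure (total_var M s) (space (total_var M s)) \<noteq> \<infinity>"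
    using assms by (simp add: integrable_iff_bounded less_top)
qed

lemma total_var_pair_measure:
  assumes "sigma_finite_measure M" "integrable M s"
  shows "total_var M s \<Otimes>\<^sub>M total_var M s
           = density (M \<Otimes>\<^sub>M M) (\<lambda>z. ennreal (\<bar>s (fst z)\<bar> * \<bar>s (snd z)\<bar>))"
proof -
  have [measurable]: "s \<in> borel_measurable M" using assms(2) by auto
  have "sigma_finite_measure (total_var M s)"
    using finite_measure_total_var[OF assms(2)] by (simp add: finite_measure_def)
  then have "total_var M s \<Otimes>\<^sub>M total_var M s
      = density (M \<Otimes>\<^sub>M M) (\<lambda>(x, y). ennreal \<bar>s x\<bar> * ennreal \<bar>s y\<bar>)"
    unfolding total_var_def using assms by (intro pair_measure_density) auto
  then show ?thesis by (simp add: case_prod_unfold ennreal_mult)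
qed

lemma integrable_total_var_pair_iff:
  fixes F :: "'a \<times> 'a \<Rightarrow> real"
  assumes "sigma_finite_measure M" "integrable M s" "F \<in> borel_measurable (M \<Otimes>\<^sub>M M)"
  shows "integrable (total_var M s \<Otimes>\<^sub>M total_var M s) F
     \<longleftrightarrow> integrable (M \<Otimes>\<^sub>M M) (\<lambda>z. F z * s (fst z) * s (snd z))"
proof -
  have [measurable]: "s \<in> borel_measurable M" using assms(2) by auto
  have "integrable (total_var M s \<Otimes>\<^sub>M total_var M s) F
     \<longleftrightarrow> integrable (M \<Otimes>\<^sub>M M) (\<lambda>z. (\<bar>s (fst z)\<bar> * \<bar>s (snd z)\<bar>) * F z)"
    unfolding total_var_pair_measure[OF assms(1,2)] using assms(3)
    by (subst integrable_density) auto
  also have "\<dots> \<longleftrightarrow> integrable (M \<Otimes>\<^sub>M M) (\<lambda>z. \<bar>F z * s (fst z) * s (snd z)\<bar>)"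
    using assms(3) by (subst integrable_abs_iff[symmetric]) (auto simp: abs_mult mult_ac)
  also have "\<dots> \<longleftrightarrow> integrable (M \<Otimes>\<^sub>M M) (\<lambda>z. F z * s (fst z) * s (snd z))"
    using assms(3) by (intro integrable_abs_iff) auto
  finally show ?thesis .
qed

lemma integrable_total_var_weight:
  assumes "integrable M s" "moment_class e M s"
  shows "integrable (total_var M s) (weight e)"
proof -
  interpret finite_measure "total_var M s"
    using finite_measure_total_var[OF assms(1)] .
  show ?thesis
    using assms(2) unfolding moment_class_def weight_def[abs_def] by simp
qed

lemma moment_class_iff:
  fixes M :: "(real^'n::finite) measure"
  assumes "sets M = sets borel" "h \<in> borel_measurable M"
  shows "moment_class e M h \<longleftrightarrow> integrable M (\<lambda>x. norm x powr e * h x)"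
proof -
  have "(\<lambda>x::real^'n. norm x powr e) \<in> borel_measurable borel"
    by measurable
  then have "(\<lambda>x::real^'n. norm x powr e) \<in> borel_measurable M"
    using measurable_cong_sets[OF assms(1) refl] by blast
  then show ?thesis
    unfolding moment_class_def using assms(2) by (rule integrable_total_var_iff[rotated])
qed

lemma moment_class_diff:
  fixes M :: "(real^'n::finite) measure"
  assumes "sets M = sets borel" "integrable M f" "integrable M g"
    and "moment_class e M f" "moment_class e M g"
  shows "moment_class e M (\<lambda>x. f x - g x)"
  using assms by (simp add: moment_class_iff right_diff_distrib)

lemma integrable_mult_if_bigo_weight:
  fixes M :: "(real^'n::finite) measure"
  assumes "sets M = sets borel" "integrable M s" "moment_class e M s"
    and "h \<in> O[top](weight e)" "continuous_on UNIV h"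
  shows "integrable M (\<lambda>x. h x * s x)"
proof -
  have "sets (total_var M s) = sets borel"
    using assms(1) by (simp add: total_var_def)
  then have "integrable (total_var M s) h"
    by (rule bigo_top_integrable[OF assms(4) borel_measurable_continuous_on_sets_borel[OF _ assms(5)]
          integrable_total_var_weight[OF assms(2,3)]])
  moreover have "s \<in> borel_measurable M" "h \<in> borel_measurable M"
    using assms(2) borel_measurable_continuous_on_sets_borel[OF assms(1,5)] by auto
  ultimately show ?thesis
    by (simp add: integrable_total_var_iff)
qed

lemma integrable_total_var_pair_if_bigo_weight:
  fixes M :: "(real^'n::finite) measure"
  assumes "sets M = sets borel" "integrable M s" "moment_class e M s"
    and "F \<in> O[top](\<lambda>z. weight e (fst z) * weight e (snd z))" "continuous_on UNIV F"
  shows "integrable (total_var M s \<Otimes>\<^sub>M total_var M s) F"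
proof -
  interpret finite_measure "total_var M s"
    using finite_measure_total_var[OF assms(2)] .
  interpret pair_sigma_finite "total_var M s" "total_var M s" ..
  have "sets (total_var M s) = sets borel"
    using assms(1) by (simp add: total_var_def)
  then have "F \<in> borel_measurable (total_var M s \<Otimes>\<^sub>M total_var M s)"
    using assms(5) by (intro borel_measurable_continuous_on_sets_borel sets_pair_measure_borel)
  moreover have "integrable (total_var M s \<Otimes>\<^sub>M total_var M s) (\<lambda>z. weight e (fst z) * weight e (snd z))"
    using integrable_total_var_weight[OF assms(2,3)] integrable_total_var_weight[OF assms(2,3)]
    by (rule integrable_product)
  ultimately show ?thesis
    by (rule bigo_top_integrable[OF assms(4)])
qed

section \<open>Polynomials and Lagrange interpolation\<close>

definition monomial :: "('n \<Rightarrow> nat) \<Rightarrow> real^'n::finite \<Rightarrow> real" where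
  "monomial k x = (\<Prod>i\<in>UNIV. (x$i) ^ k i)"

lemma poly_space_iff_monomials:
  "q \<in> poly_space m \<longleftrightarrow> (\<exists>c. \<forall>x. q x = (\<Sum>k\<in>{k. sum k UNIV \<le> m}. c k * monomial k x))"
  unfolding poly_space_def monomial_def by simp

lemma abs_monomial_le:
  assumes "sum k UNIV \<le> m"
  shows "\<bar>monomial k x\<bar> \<le> weight (real m) x"
proof -
  have "\<bar>monomial k x\<bar> = (\<Prod>i\<in>UNIV. \<bar>x$i\<bar> ^ k i)"
    by (simp add: monomial_def abs_prod power_abs)
  also have "\<dots> \<le> (\<Prod>i\<in>UNIV. norm x ^ k i)"
    by (intro prod_mono conjI power_mono) (auto simp: component_le_norm_cart)
  also have "\<dots> = norm x ^ sum k UNIV" by (simp add: power_sum)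
  also have "\<dots> \<le> weight (real m) x" using assms by (intro power_le_weight) (simp only: of_nat_le_iff)
  finally show ?thesis .
qed

lemma poly_space_bigo:
  assumes "q \<in> poly_space m"
  shows "q \<in> O[top](weight (real m))"
proof -
  obtain c where c: "\<And>x. q x = (\<Sum>k\<in>{k. sum k UNIV \<le> m}. c k * monomial k x)"
    using assms unfolding poly_space_iff_monomials by blast
  define S where "S = (\<Sum>k\<in>{k. sum k UNIV \<le> m}. \<bar>c k\<bar>)"
  have "\<bar>q x\<bar> \<le> (1 + S) * weight (real m) x" for x
  proof -
    have "\<bar>q x\<bar> \<le> (\<Sum>k\<in>{k. sum k UNIV \<le> m}. \<bar>c k\<bar> * \<bar>monomial k x\<bar>)"
      unfolding c abs_mult[symmetric] by (rule sum_abs)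
    also have "\<dots> \<le> (\<Sum>k\<in>{k. sum k UNIV \<le> m}. \<bar>c k\<bar> * weight (real m) x)"
      by (intro sum_mono mult_left_mono abs_monomial_le) auto
    also have "\<dots> \<le> (1 + S) * weight (real m) x"
      using weight_ge_1[of "real m" x] by (simp add: S_def sum_distrib_right[symmetric])
    finally show ?thesis .
  qed
  then show ?thesis
    by (intro bigoI[of _ "1 + S"]) simp
qed

lemma poly_space_continuous:
  assumes "q \<in> poly_space m"
  shows "continuous_on UNIV q"
proof -
  obtain c where "\<And>x. q x = (\<Sum>k\<in>{k. sum k UNIV \<le> m}. c k * monomial k x)"
    using assms unfolding poly_space_iff_monomials by blast
  then have "q = (\<lambda>x. \<Sum>k\<in>{k. sum k UNIV \<le> m}. c k * monomial k x)" by auto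
  then show ?thesis unfolding monomial_def by (auto intro!: continuous_intros)
qed

lemma poly_space_zero: "(\<lambda>x. 0) \<in> poly_space m"
  unfolding poly_space_iff_monomials by (auto intro!: exI[of _ "\<lambda>k. 0"])

lemma poly_space_add:
  assumes "p \<in> poly_space m" "q \<in> poly_space m"
  shows "(\<lambda>x. p x + q x) \<in> poly_space m"
proof -
  obtain c where c: "\<forall>x. p x = (\<Sum>k\<in>{k. sum k UNIV \<le> m}. c k * monomial k x)"
    using assms(1) unfolding poly_space_iff_monomials by blast
  obtain d where d: "\<forall>x. q x = (\<Sum>k\<in>{k. sum k UNIV \<le> m}. d k * monomial k x)"
    using assms(2) unfolding poly_space_iff_monomials by blast
  show ?thesis unfolding poly_space_iff_monomials
    by (rule exI[of _ "\<lambda>k. c k + d k"]) (use c d in \<open>simp add: sum.distrib distrib_right\<close>)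
qed

lemma poly_space_cmult:
  assumes "p \<in> poly_space m"
  shows "(\<lambda>x. a * p x) \<in> poly_space m"
proof -
  obtain c where c: "\<forall>x. p x = (\<Sum>k\<in>{k. sum k UNIV \<le> m}. c k * monomial k x)"
    using assms unfolding poly_space_iff_monomials by blast
  show ?thesis unfolding poly_space_iff_monomials
    by (rule exI[of _ "\<lambda>k. a * c k"]) (use c in \<open>simp add: sum_distrib_left mult.assoc\<close>)
qed

lemma poly_space_diff:
  assumes "p \<in> poly_space m" "q \<in> poly_space m"
  shows "(\<lambda>x. p x - q x) \<in> poly_space m"
  using poly_space_add[OF assms(1) poly_space_cmult[OF assms(2), of "-1"]] by simp

lemma poly_space_sum:
  assumes "\<And>j. j \<in> A \<Longrightarrow> p j \<in> poly_space m"
  shows "(\<lambda>x. \<Sum>j\<in>A. a j * p j x) \<in> poly_space m"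
  using assms
proof (induction A rule: infinite_finite_induct)
  case (insert j A)
  then show ?case
    using poly_space_add[OF poly_space_cmult[of "p j" m "a j"] insert.IH] by simp
qed (simp_all add: poly_space_zero)

locale lagrange_basis =
  fixes m N :: nat and xi :: "nat \<Rightarrow> real^'n::finite" and p :: "nat \<Rightarrow> real^'n \<Rightarrow> real"
  assumes unisolvent: "unisolvent m N xi"
    and basis_poly: "\<forall>j<N. p j \<in> poly_space m"
    and basis_at_nodes: "\<forall>j<N. \<forall>k<N. p j (xi k) = (if j = k then 1 else 0)"
begin

lemma interpolation:
  assumes q: "q \<in> poly_space m"
  shows "q x = (\<Sum>j<N. q (xi j) * p j x)"
proof -
  define h where "h x = q x - (\<Sum>j<N. q (xi j) * p j x)" for x
  have "h \<in> poly_space m"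
    unfolding h_def[abs_def] using basis_poly by (intro poly_space_diff q poly_space_sum) auto
  moreover have "h (xi k) = 0" if "k < N" for k
  proof -
    have "(\<Sum>j<N. q (xi j) * p j (xi k)) = (\<Sum>j<N. if j = k then q (xi k) else 0)"
      using basis_at_nodes that by (intro sum.cong) auto
    then show ?thesis using that by (simp add: h_def)
  qed
  ultimately have "h x = 0"
    using unisolvent unfolding unisolvent_def by blast
  then show ?thesis by (simp add: h_def)
qed

end

section \<open>Quadratic forms of conditionally positive definite functions\<close>

definition kernel_form :: "('a::ab_group_add \<Rightarrow> real) \<Rightarrow> nat \<Rightarrow> (nat \<Rightarrow> 'a) \<Rightarrow>
    (nat \<Rightarrow> real) \<Rightarrow> (nat \<Rightarrow> real) \<Rightarrow> real" where
  "kernel_form \<Phi> M z a b = (\<Sum>j<M. \<Sum>k<M. a j * b k * \<Phi> (z j - z k))"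

lemma kernel_form_commute:
  assumes "\<And>x. \<Phi> (- x) = \<Phi> x"
  shows "kernel_form \<Phi> M z a b = kernel_form \<Phi> M z b a"
proof -
  have "\<Phi> (z k - z j) = \<Phi> (z j - z k)" for j k
    using assms[of "z j - z k"] by simp
  then show ?thesis
    unfolding kernel_form_def by (subst sum.swap) (simp add: mult.commute)
qed

lemma kernel_form_linear_combination:
  "kernel_form \<Phi> M z (\<lambda>j. s * a j + t * b j) (\<lambda>j. s * a j + t * b j)
     = s\<^sup>2 * kernel_form \<Phi> M z a a + s * t * (kernel_form \<Phi> M z a b + kernel_form \<Phi> M z b a)
       + t\<^sup>2 * kernel_form \<Phi> M z b b"
  unfolding kernel_form_def power2_eq_square
  by (simp add: sum.distrib sum_distrib_left algebra_simps)

lemma kernel_form_nonneg: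
  assumes "cond_pos_def r (\<lambda>x. complex_of_real (\<Phi> x))"
    and "\<forall>q\<in>poly_space (r - 1). (\<Sum>j<M. a j * q (z j)) = 0"
  shows "0 \<le> kernel_form \<Phi> M z a a"
proof (cases "\<exists>j<M. a j \<noteq> 0")
  case True
  let ?a = "\<lambda>j. complex_of_real (a j)"
  have "\<exists>j<M. ?a j \<noteq> 0" using True by simp
  moreover have "\<forall>q\<in>poly_space (r - 1). (\<Sum>j<M. ?a j * complex_of_real (q (z j))) = 0"
    using assms(2) by (simp flip: of_real_mult of_real_sum)
  ultimately have "0 \<le> Re (\<Sum>j<M. \<Sum>k<M. ?a j * cnj (?a k) * complex_of_real (\<Phi> (z j - z k)))"
    using assms(1)[unfolded cond_pos_def_def, THEN conjunct2, THEN conjunct2, rule_format,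
        where M=M and x=z and a="?a"] by blast
  also have "\<dots> = kernel_form \<Phi> M z a a"
    unfolding kernel_form_def by simp
  finally show ?thesis .
next
  case False
  then show ?thesis unfolding kernel_form_def by simp
qed

lemma abs_le_of_quadratic_form_nonneg:
  fixes a b c k u v :: real
  assumes "\<And>s t. 0 \<le> s\<^sup>2 * a + 2 * s * t * b + t\<^sup>2 * c"
    and "a \<le> k * u\<^sup>2" "c \<le> k * v\<^sup>2" "0 < u" "0 < v"
  shows "\<bar>b\<bar> \<le> k * u * v"
proof -
  have "v\<^sup>2 * a + u\<^sup>2 * c \<le> 2 * k * (u * v)\<^sup>2"
    using mult_left_mono[OF assms(2), of "v\<^sup>2"] mult_left_mono[OF assms(3), of "u\<^sup>2"]
    by (simp add: power2_eq_square algebra_simps)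
  moreover have "0 \<le> v\<^sup>2 * a + 2 * (u * v) * b + u\<^sup>2 * c"
    using assms(1)[of v u] by (simp add: algebra_simps)
  moreover have "0 \<le> v\<^sup>2 * a - 2 * (u * v) * b + u\<^sup>2 * c"
    using assms(1)[of v "- u"] by (simp add: algebra_simps power2_eq_square)
  ultimately have "(u * v) * \<bar>b\<bar> \<le> (u * v) * (k * (u * v))"
    by (simp add: power2_eq_square abs_if algebra_simps)
  then show ?thesis
    using assms(4,5) by (simp add: mult.assoc)
qed

section \<open>The reduced kernel\<close>

locale reduced_kernel = lagrange_basis "r - 1" N xi p
  for r N :: nat and xi :: "nat \<Rightarrow> real^'n::finite" and p :: "nat \<Rightarrow> real^'n \<Rightarrow> real" +
  fixes \<Phi> :: "real^'n \<Rightarrow> real"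
  assumes cpd: "cond_pos_def r (\<lambda>x. complex_of_real (\<Phi> x))"
begin

abbreviation K :: "real^'n \<Rightarrow> real^'n \<Rightarrow> real" where
  "K \<equiv> red_kernel \<Phi> p xi N"

lemma Phi_minus: "\<Phi> (- x) = \<Phi> x"
  using cpd unfolding cond_pos_def_def by auto

lemma Phi_continuous: "continuous_on UNIV \<Phi>"
  using cpd unfolding cond_pos_def_def by auto

lemma continuous_on_Phi [continuous_intros]: "continuous_on S h \<Longrightarrow> continuous_on S (\<lambda>z. \<Phi> (h z))"
  using continuous_on_compose2[OF Phi_continuous] by blast

lemma red_kernel_continuous: "continuous_on UNIV (\<lambda>z. K (fst z) (snd z))"
proof -
  have [continuous_intros]: "continuous_on S (\<lambda>z. p j (h z))" if "j < N" "continuous_on S h" for j S h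
    using continuous_on_compose2[OF poly_space_continuous[OF basis_poly[rule_format, OF that(1)]] that(2)]
    by simp
  show ?thesis unfolding red_kernel_def by (intro continuous_intros) auto
qed

(* The functional q \<mapsto> q v - (\<Sum>j<N. p j v * q (xi j)), which kills polynomials of degree < r,
   written on the nodes x, y, xi 0, ..., xi (N - 1) with v placed at node i \<in> {0, 1}. *)
definition nodes :: "real^'n \<Rightarrow> real^'n \<Rightarrow> nat \<Rightarrow> real^'n" where
  "nodes x y u = (if u = 0 then x else if u = 1 then y else xi (u - 2))"

definition error_coeffs :: "nat \<Rightarrow> real^'n \<Rightarrow> nat \<Rightarrow> real" where
  "error_coeffs i v u = (if u < 2 then (if u = i then 1 else 0) else - p (u - 2) v)"

lemma sum_nodes_split:
  fixes f :: "nat \<Rightarrow> 'a::comm_monoid_add"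
  shows "(\<Sum>u<Suc (Suc N). f u) = f 0 + f 1 + (\<Sum>j<N. f (Suc (Suc j)))"
  by (simp only: sum.lessThan_Suc_shift) (simp add: add.assoc)

lemma red_kernel_eq_kernel_form:
  "K x y = kernel_form \<Phi> (Suc (Suc N)) (nodes x y) (error_coeffs 0 x) (error_coeffs 1 y)"
  "K x x = kernel_form \<Phi> (Suc (Suc N)) (nodes x y) (error_coeffs 0 x) (error_coeffs 0 x)"
  "K y y = kernel_form \<Phi> (Suc (Suc N)) (nodes x y) (error_coeffs 1 y) (error_coeffs 1 y)"
  unfolding kernel_form_def red_kernel_def sum_nodes_split
  by (simp_all add: nodes_def error_coeffs_def sum.distrib sum_subtractf sum_distrib_left sum_negf algebra_simps)

lemma error_coeffs_annihilate_polys: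
  assumes "q \<in> poly_space (r - 1)" "i < 2" "nodes x y i = v"
  shows "(\<Sum>u<Suc (Suc N). error_coeffs i v u * q (nodes x y u)) = 0"
proof -
  have "(\<Sum>j<N. error_coeffs i v (Suc (Suc j)) * q (nodes x y (Suc (Suc j)))) = - q v"
    using interpolation[OF assms(1), of v]
    by (simp add: error_coeffs_def nodes_def sum_negf mult.commute)
  moreover have "error_coeffs i v 0 * q (nodes x y 0) + error_coeffs i v 1 * q (nodes x y 1) = q v"
    using assms(2,3) by (cases i) (auto simp: error_coeffs_def nodes_def)
  ultimately show ?thesis unfolding sum_nodes_split by simp
qed

lemma red_kernel_quadratic_nonneg: "0 \<le> s\<^sup>2 * K x x + 2 * s * t * K x y + t\<^sup>2 * K y y"
proof -
  let ?z = "nodes x y" and ?a = "error_coeffs 0 x" and ?b = "error_coeffs 1 y"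
  have "(\<Sum>u<Suc (Suc N). (s * ?a u + t * ?b u) * q (?z u)) = 0" if "q \<in> poly_space (r - 1)" for q
  proof -
    have "(\<Sum>u<Suc (Suc N). (s * ?a u + t * ?b u) * q (?z u))
        = s * (\<Sum>u<Suc (Suc N). ?a u * q (?z u)) + t * (\<Sum>u<Suc (Suc N). ?b u * q (?z u))"
      by (simp add: algebra_simps sum.distrib sum_distrib_left)
    moreover have "(\<Sum>u<Suc (Suc N). ?a u * q (?z u)) = 0" "(\<Sum>u<Suc (Suc N). ?b u * q (?z u)) = 0"
      by (rule error_coeffs_annihilate_polys[OF that]; simp add: nodes_def)+
    ultimately show ?thesis by simp
  qed
  then have "0 \<le> kernel_form \<Phi> (Suc (Suc N)) ?z (\<lambda>u. s * ?a u + t * ?b u) (\<lambda>u. s * ?a u + t * ?b u)"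
    by (intro kernel_form_nonneg[OF cpd]) auto
  also have "\<dots> = s\<^sup>2 * K x x + 2 * s * t * K x y + t\<^sup>2 * K y y"
    unfolding kernel_form_linear_combination kernel_form_commute[of \<Phi>, OF Phi_minus, of _ _ ?b ?a]
      red_kernel_eq_kernel_form[where x = x and y = y, symmetric] by (simp add: algebra_simps)
  finally show ?thesis .
qed

lemma abs_red_kernel_le:
  assumes "\<And>x. K x x \<le> c * (w x)\<^sup>2" "\<And>x. 0 < w x"
  shows "\<bar>K x y\<bar> \<le> c * w x * w y"
  by (rule abs_le_of_quadratic_form_nonneg[where a = "K x x" and c = "K y y"])
    (use red_kernel_quadratic_nonneg assms in auto)

lemma red_kernel_mult_expansion:
  "K x y * u * v = \<Phi> (x - y) * u * v
     - (\<Sum>j<N. (p j x * u) * (\<Phi> (xi j - y) * v)) - (\<Sum>j<N. (\<Phi> (x - xi j) * u) * (p j y * v))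
     + (\<Sum>j<N. (p j x * u) * (\<Sum>k<N. \<Phi> (xi j - xi k) * (p k y * v)))"
  unfolding red_kernel_def by (simp add: sum_distrib_left sum_distrib_right algebra_simps)

end

locale reduced_kernel_growth = reduced_kernel r N xi p \<Phi>
  for r N :: nat and xi :: "nat \<Rightarrow> real^'n::finite" and p and \<Phi> :: "real^'n \<Rightarrow> real" +
  fixes \<alpha> C :: real
  assumes r_pos: "1 \<le> r" and alpha_nonneg: "0 \<le> \<alpha>"
    and growth: "\<forall>x. \<bar>\<Phi> x\<bar> \<le> C * (1 + norm x powr \<alpha>)"
begin

definition \<beta> :: real where
  "\<beta> = max (real r - 1) ((real r - 1 + \<alpha>) / 2)"

lemma beta_bounds: "real (r - 1) \<le> \<beta>" "real (r - 1) + \<alpha> \<le> 2 * \<beta>"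
proof -
  have "real r - 1 \<le> \<beta>" "(real r - 1 + \<alpha>) / 2 \<le> \<beta>"
    unfolding \<beta>_def by auto
  then show "real (r - 1) \<le> \<beta>" "real (r - 1) + \<alpha> \<le> 2 * \<beta>"
    using r_pos by (simp_all add: of_nat_diff)
qed

lemma abs_Phi_diff_le: "\<bar>\<Phi> (x - y)\<bar> \<le> C * (1 + 2 powr \<alpha>) * weight \<alpha> x * weight \<alpha> y"
proof -
  have "0 \<le> C" using growth[rule_format, of 0] by simp
  then have "\<bar>\<Phi> (x - y)\<bar> \<le> C * weight \<alpha> (x - y)"
    using growth by (simp add: weight_def)
  also have "\<dots> \<le> C * ((1 + 2 powr \<alpha>) * weight \<alpha> x * weight \<alpha> y)"
    using \<open>0 \<le> C\<close> weight_diff_le[OF alpha_nonneg] by (rule mult_left_mono[rotated])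
  finally show ?thesis by (simp add: mult.assoc)
qed

lemma Phi_diff_bigo: "(\<lambda>z. \<Phi> (fst z - snd z)) \<in> O[top](\<lambda>z. weight \<alpha> (fst z) * weight \<alpha> (snd z))"
  using abs_Phi_diff_le by (intro bigoI[of _ "C * (1 + 2 powr \<alpha>)"]) (simp add: abs_mult mult.assoc)

lemma Phi_translate_bigo:
  "(\<lambda>x. \<Phi> (a - x)) \<in> O[top](weight \<alpha>)" "(\<lambda>x. \<Phi> (x - a)) \<in> O[top](weight \<alpha>)"
  using abs_Phi_diff_le[of a] abs_Phi_diff_le[of _ a]
  by (auto intro!: bigoI[of _ "C * (1 + 2 powr \<alpha>) * weight \<alpha> a"] simp: mult_ac)

lemma basis_bigo: "j < N \<Longrightarrow> p j \<in> O[top](weight \<beta>)"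
  using poly_space_bigo[of "p j" "r - 1"] basis_poly weight_mono_bigo[OF _ beta_bounds(1)]
  by (auto intro: landau_o.big_trans)

lemma basis_continuous: "j < N \<Longrightarrow> continuous_on UNIV (p j)"
  using basis_poly poly_space_continuous by blast

lemma red_kernel_diag_bigo: "(\<lambda>x. K x x) \<in> O[top](\<lambda>x. (weight \<beta> x)\<^sup>2)"
proof -
  let ?w = "weight (real (r - 1))" and ?W = "\<lambda>x. (weight \<beta> x)\<^sup>2"
  have basis: "p j \<in> O[top](?w)" if "j < N" for j
    using poly_space_bigo[of "p j" "r - 1"] basis_poly that by auto
  have mixed: "(\<lambda>x. ?w x * weight \<alpha> x) \<in> O[top](?W)"
    using beta_bounds alpha_nonneg by (intro weight_mult_bigo) auto
  have square: "(\<lambda>x. ?w x * ?w x) \<in> O[top](?W)"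
    using beta_bounds by (intro weight_mult_bigo) auto
  have const: "(\<lambda>_. c) \<in> O[top](?W)" for c
    by (intro bigoI[of _ "\<bar>c\<bar>"]) (simp add: mult_le_cancel_left1 one_le_power weight_ge_1)
  have "(\<lambda>x. \<Phi> (x - x)) \<in> O[top](?W)"
    using const by simp
  moreover have "(\<lambda>x. \<Sum>j<N. p j x * \<Phi> (xi j - x)) \<in> O[top](?W)"
    by (intro big_sum_in_bigo landau_o.big_trans[OF landau_o.big.mult[OF basis Phi_translate_bigo(1)] mixed])
      auto
  moreover have "(\<lambda>x. \<Sum>k<N. p k x * \<Phi> (x - xi k)) \<in> O[top](?W)"
    by (intro big_sum_in_bigo landau_o.big_trans[OF landau_o.big.mult[OF basis Phi_translate_bigo(2)] mixed])
      auto
  moreover have "(\<lambda>x. \<Sum>j<N. \<Sum>k<N. p j x * p k x * \<Phi> (xi j - xi k)) \<in> O[top](?W)"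
  proof (intro big_sum_in_bigo)
    fix j k assume "j \<in> {..<N}" "k \<in> {..<N}"
    then have "(\<lambda>x. p j x * p k x * \<Phi> (xi j - xi k)) \<in> O[top](\<lambda>x. ?w x * ?w x * 1)"
      using basis by (intro landau_o.big.mult bigo_const) auto
    then show "(\<lambda>x. p j x * p k x * \<Phi> (xi j - xi k)) \<in> O[top](?W)"
      using square by (auto intro: landau_o.big_trans)
  qed
  ultimately show ?thesis
    unfolding red_kernel_def by (intro sum_in_bigo)
qed

lemma red_kernel_bigo:
  "(\<lambda>z. K (fst z) (snd z)) \<in> O[top](\<lambda>z. weight \<beta> (fst z) * weight \<beta> (snd z))"
proof -
  obtain c where c: "\<forall>x. \<bar>K x x\<bar> \<le> c * (weight \<beta> x)\<^sup>2"
    using red_kernel_diag_bigo by (elim landau_o.bigE) auto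
  have "\<bar>K x y\<bar> \<le> c * weight \<beta> x * weight \<beta> y" for x y
    by (rule abs_red_kernel_le) (use c abs_le_D1 weight_pos in blast)+
  then show ?thesis
    by (intro bigoI[of _ c]) (simp add: abs_mult mult.assoc)
qed

end

context reduced_kernel_growth
begin

lemma integrable_translation_kernel:
  assumes "sets M = sets borel" "integrable M s" "moment_class \<alpha> M s"
  shows "integrable (total_var M s \<Otimes>\<^sub>M total_var M s) (\<lambda>z. \<Phi> (fst z - snd z))"
  using assms Phi_diff_bigo
  by (rule integrable_total_var_pair_if_bigo_weight) (intro continuous_intros)

lemma integrable_reduced_kernel:
  assumes "sets M = sets borel" "integrable M s" "moment_class \<beta> M s"
  shows "integrable (total_var M s \<Otimes>\<^sub>M total_var M s) (\<lambda>z. K (fst z) (snd z))"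
  using assms red_kernel_bigo red_kernel_continuous by (rule integrable_total_var_pair_if_bigo_weight)

lemma basis_integrable_mult:
  assumes "sets M = sets borel" "integrable M h" "moment_class \<beta> M h" "j < N"
  shows "integrable M (\<lambda>x. p j x * h x)"
  using assms(1-3) basis_bigo[OF assms(4)] basis_continuous[OF assms(4)]
  by (rule integrable_mult_if_bigo_weight)

lemma Phi_translate_integrable_mult:
  assumes "sets M = sets borel" "integrable M h" "moment_class \<alpha> M h"
  shows "integrable M (\<lambda>y. \<Phi> (a - y) * h y)" "integrable M (\<lambda>y. \<Phi> (y - a) * h y)"
  using assms Phi_translate_bigo by (auto intro!: integrable_mult_if_bigo_weight continuous_intros)

lemma discr2_translation_kernel_eq_reduced:
  assumes M: "finite_measure M" "sets M = sets borel"
    and fg: "integrable M f" "integrable M g"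
    and moments: "moment_class \<alpha> M f" "moment_class \<alpha> M g" "moment_class \<beta> M f" "moment_class \<beta> M g"
    and orth: "\<forall>q\<in>poly_space (r - 1). (\<integral>x. q x * f x \<partial>M) = (\<integral>x. q x * g x \<partial>M)"
  defines "\<sigma> \<equiv> \<lambda>x. f x - g x"
  shows "discr2 M \<sigma> (\<lambda>x y. \<Phi> (x - y)) = discr2 M \<sigma> K"
proof -
  interpret finite_measure M by (fact M(1))
  interpret pair_sigma_finite M M ..
  have \<sigma>: "integrable M \<sigma>" "moment_class \<alpha> M \<sigma>"
    unfolding \<sigma>_def using M(2) fg moments by (auto intro: moment_class_diff)
  define P where "P j x = p j x * \<sigma> x" for j x
  have P: "integrable M (P j)" "(\<integral>x. P j x \<partial>M) = 0" if "j < N" for j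
  proof -
    have "P j = (\<lambda>x. p j x * f x - p j x * g x)"
      unfolding P_def \<sigma>_def by (simp add: fun_eq_iff algebra_simps)
    then show "integrable M (P j)" "(\<integral>x. P j x \<partial>M) = 0"
      using basis_integrable_mult[OF M(2) fg(1) moments(3) that]
        basis_integrable_mult[OF M(2) fg(2) moments(4) that] orth basis_poly that by auto
  qed
  note Q = Phi_translate_integrable_mult[OF M(2) \<sigma>]
  have R: "integrable M (\<lambda>y. \<Sum>k<N. \<Phi> (xi j - xi k) * P k y)" for j
    by (intro Bochner_Integration.integrable_sum Bochner_Integration.integrable_mult_right P(1)) simp
  have "integrable (M \<Otimes>\<^sub>M M) (\<lambda>z. \<Phi> (fst z - snd z) * \<sigma> (fst z) * \<sigma> (snd z))"
    using integrable_translation_kernel[OF M(2) \<sigma>]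
    by (subst (asm) integrable_total_var_pair_iff)
      (auto intro!: borel_measurable_continuous_on_sets_borel sets_pair_measure_borel M(2) \<sigma>(1)
        continuous_intros M(1)[unfolded finite_measure_def, THEN conjunct1])
  moreover have "integrable (M \<Otimes>\<^sub>M M) (\<lambda>z. \<Sum>j<N. P j (fst z) * (\<Phi> (xi j - snd z) * \<sigma> (snd z)))"
    "(\<integral>z. (\<Sum>j<N. P j (fst z) * (\<Phi> (xi j - snd z) * \<sigma> (snd z))) \<partial>(M \<Otimes>\<^sub>M M)) = 0"
    using integral_sum_products[of "{..<N}" P "\<lambda>j y. \<Phi> (xi j - y) * \<sigma> y"] P Q by simp_all
  moreover have "integrable (M \<Otimes>\<^sub>M M) (\<lambda>z. \<Sum>j<N. (\<Phi> (fst z - xi j) * \<sigma> (fst z)) * P j (snd z))"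
    "(\<integral>z. (\<Sum>j<N. (\<Phi> (fst z - xi j) * \<sigma> (fst z)) * P j (snd z)) \<partial>(M \<Otimes>\<^sub>M M)) = 0"
    using integral_sum_products[of "{..<N}" "\<lambda>j x. \<Phi> (x - xi j) * \<sigma> x" P] P Q by simp_all
  moreover have "integrable (M \<Otimes>\<^sub>M M) (\<lambda>z. \<Sum>j<N. P j (fst z) * (\<Sum>k<N. \<Phi> (xi j - xi k) * P k (snd z)))"
    "(\<integral>z. (\<Sum>j<N. P j (fst z) * (\<Sum>k<N. \<Phi> (xi j - xi k) * P k (snd z))) \<partial>(M \<Otimes>\<^sub>M M)) = 0"
    using integral_sum_products[of "{..<N}" P "\<lambda>j y. \<Sum>k<N. \<Phi> (xi j - xi k) * P k y"] P R
    by simp_all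
  ultimately show ?thesis
    unfolding discr2_def red_kernel_mult_expansion P_def[symmetric] by simp
qed

end

theorem mainTheorem12:
  fixes r N :: nat and \<alpha> C :: real
    and \<Phi> :: "real^'n::finite \<Rightarrow> real"
    and xi :: "nat \<Rightarrow> real^'n" and p :: "nat \<Rightarrow> real^'n \<Rightarrow> real"
    and lam :: "(real^'n) measure" and f g :: "real^'n \<Rightarrow> real"
  assumes r: "r \<ge> 1" and alpha: "\<alpha> > 0"
    and CP: "cond_pos_def r (\<lambda>x. complex_of_real (\<Phi> x))"
    and growth: "\<forall>x. \<bar>\<Phi> x\<bar> \<le> C * (1 + norm x powr \<alpha>)"
    and N: "N = (CARD('n) + r - 1) choose (r - 1)"
    and xi_inj: "inj_on xi {..<N}"
    and unisolv: "unisolvent (r - 1) N xi"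
    and p_poly: "\<forall>j<N. p j \<in> poly_space (r - 1)"
    and lagrange: "\<forall>j<N. \<forall>k<N. p j (xi k) = (if j = k then 1 else 0)"
    and lam_fin: "finite_measure lam" and lam_sets: "sets lam = sets borel"
    and f_int: "integrable lam f" and g_int: "integrable lam g"
  shows
    "let \<beta> = max (real r - 1) ((real r - 1 + \<alpha>) / 2);
         \<sigma> = (\<lambda>x. f x - g x);
         Kt = (\<lambda>x y. \<Phi> (x - y));
         K = red_kernel \<Phi> p xi N
     in (moment_class \<alpha> lam f \<and> moment_class \<alpha> lam g \<longrightarrow>
           integrable (total_var lam \<sigma> \<Otimes>\<^sub>M total_var lam \<sigma>) (\<lambda>z. Kt (fst z) (snd z)))
      \<and> (moment_class \<beta> lam f \<and> moment_class \<beta> lam g \<longrightarrow>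
           integrable (total_var lam \<sigma> \<Otimes>\<^sub>M total_var lam \<sigma>) (\<lambda>z. K (fst z) (snd z)))
      \<and> (moment_class \<alpha> lam f \<and> moment_class \<alpha> lam g \<and>
         moment_class \<beta> lam f \<and> moment_class \<beta> lam g \<and>
         (\<forall>q\<in>poly_space (r - 1). (\<integral>x. q x * f x \<partial>lam) = (\<integral>x. q x * g x \<partial>lam))
         \<longrightarrow> discr2 lam \<sigma> Kt = discr2 lam \<sigma> K)"
proof -
  interpret reduced_kernel_growth r N xi p \<Phi> \<alpha> C
    using r alpha CP growth unisolv p_poly lagrange by unfold_locales auto
  \<comment> \<open>The value of N and the injectivity of xi are not needed: unisolvence and the Lagrange
    property of p are all the argument uses.\<close>
  have \<sigma>: "integrable lam (\<lambda>x. f x - g x)" using f_int g_int by simp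
  have moments_\<sigma>: "moment_class e lam (\<lambda>x. f x - g x)"
    if "moment_class e lam f" "moment_class e lam g" for e
    using lam_sets f_int g_int that by (rule moment_class_diff)
  show ?thesis
    unfolding Let_def \<beta>_def[symmetric]
    using integrable_translation_kernel[OF lam_sets \<sigma> moments_\<sigma>]
      integrable_reduced_kernel[OF lam_sets \<sigma> moments_\<sigma>]
      discr2_translation_kernel_eq_reduced[OF lam_fin lam_sets f_int g_int]
    by blast
qed


end
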